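(* Let $A: E\supseteq D(A)\to E$ be a closed linear operator on a complex Banach space $E$. Assume that all sufficiently large real numbers $\lambda$ belong to $\rho(A)$ and that $\lambda R(\lambda,A)$ is bounded in operator norm as $\lambda\to\infty$. If there exist $\mu_0\in\rho(A)$ and an integer $k\ge1$ such that $R(\mu_0,A)^k$ is compact, then $R(\lambda,A)$ is compact for every $\lambda\in\rho(A)$.
   Context: $R(\lambda,A)=(\lambda-A)^{-1}$ and $\rho(A)$ is the resolvent set. *)

theory Defs
  imports "HOL-Analysis.Analysis"
begin

class complex_vector_c = real_vector +
  fixes scaleC :: "complex \<Rightarrow> 'a \<Rightarrow> 'a" (infixr \<open>*\<^sub>C\<close> 75)
  assumes scaleC_add_right: "a *\<^sub>C (x + y) = a *\<^sub>C x + a *\<^sub>C y"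
    and scaleC_add_left: "(a + b) *\<^sub>C x = a *\<^sub>C x + b *\<^sub>C x"
    and scaleC_scaleC: "a *\<^sub>C (b *\<^sub>C x) = (a * b) *\<^sub>C x"
    and scaleC_one: "1 *\<^sub>C x = x"
    and scaleC_of_real: "(complex_of_real r) *\<^sub>C x = r *\<^sub>R x"

class complex_normed_vector_c = complex_vector_c + real_normed_vector +
  assumes norm_scaleC: "norm (a *\<^sub>C x) = cmod a * norm x"

class complex_banach = complex_normed_vector_c + banach

text \<open>A (possibly unbounded) linear operator A with domain D is modelled by the pair (D, A);
  values of A outside D are irrelevant.\<close>

definition closed_operator :: "'a::complex_banach set \<Rightarrow> ('a \<Rightarrow> 'a) \<Rightarrow> bool" where
  "closed_operator D A \<longleftrightarrow>
     0 \<in> D \<and> (\<forall>x\<in>D. \<forall>y\<in>D. x + y \<in> D) \<and> (\<forall>c. \<forall>x\<in>D. c *\<^sub>C x \<in> D) \<and>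
     (\<forall>x\<in>D. \<forall>y\<in>D. A (x + y) = A x + A y) \<and> (\<forall>c. \<forall>x\<in>D. A (c *\<^sub>C x) = c *\<^sub>C A x) \<and>
     closed {(x, A x) | x. x \<in> D}"

definition is_resolvent :: "'a::complex_banach set \<Rightarrow> ('a \<Rightarrow> 'a) \<Rightarrow> complex \<Rightarrow> ('a \<Rightarrow> 'a) \<Rightarrow> bool" where
  "is_resolvent D A l R \<longleftrightarrow>
     bounded_linear R \<and> (\<forall>y. R y \<in> D \<and> l *\<^sub>C R y - A (R y) = y) \<and>
     (\<forall>x\<in>D. R (l *\<^sub>C x - A x) = x)"

definition resolvent_set :: "'a::complex_banach set \<Rightarrow> ('a \<Rightarrow> 'a) \<Rightarrow> complex set" where
  "resolvent_set D A = {l. \<exists>R. is_resolvent D A l R}"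

definition resolvent :: "'a::complex_banach set \<Rightarrow> ('a \<Rightarrow> 'a) \<Rightarrow> complex \<Rightarrow> 'a \<Rightarrow> 'a" where
  "resolvent D A l = (SOME R. is_resolvent D A l R)"

definition compact_operator :: "('a::real_normed_vector \<Rightarrow> 'b::real_normed_vector) \<Rightarrow> bool" where
  "compact_operator T \<longleftrightarrow> bounded_linear T \<and> compact (closure (T ` ball 0 1))"


instantiation complex :: complex_banach
begin
definition scaleC_complex :: "complex \<Rightarrow> complex \<Rightarrow> complex" where "scaleC_complex a x = a * x"
instance by standard (auto simp: scaleC_complex_def algebra_simps norm_mult scaleR_conv_of_real)
end

end

theory Submission
  imports Defs
begin

text \<open>Write \<open>S = R(\<mu>0,A)\<close>. The resolvent identity \<open>R(t,A) = S + (\<mu>0 - t) R(t,A) S\<close>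
  gives \<open>S - t R(t,A) S = R(t,A) - \<mu>0 R(t,A) S\<close>, which is \<open>O(1/t)\<close> in operator norm by the
  bound on \<open>t R(t,A)\<close>; applied once more it gives \<open>t R(t,A) S = B S^2\<close> with \<open>B\<close> bounded.
  Hence \<open>S^n\<close> is an operator-norm limit of the operators \<open>B S^(n+1)\<close>, which are compact as
  soon as \<open>S^(n+1)\<close> is, and descending from \<open>S^k\<close> shows that \<open>S\<close> is compact. Finally
  \<open>R(\<lambda>,A) = (I + (\<mu>0 - \<lambda>) R(\<lambda>,A)) S\<close> is compact for every \<open>\<lambda>\<close> in the resolvent set.\<close>

lemma scaleC_diff_right: "(c::complex) *\<^sub>C ((x::'a::complex_vector_c) - y) = c *\<^sub>C x - c *\<^sub>C y"
  by (metis add_diff_cancel diff_add_cancel scaleC_add_right)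

lemma scaleC_diff_left: "((a::complex) - b) *\<^sub>C (x::'a::complex_vector_c) = a *\<^sub>C x - b *\<^sub>C x"
  by (metis add_diff_cancel diff_add_cancel scaleC_add_left)

lemma scaleC_scaleR_commute: "(c::complex) *\<^sub>C (r *\<^sub>R (x::'a::complex_vector_c)) = r *\<^sub>R (c *\<^sub>C x)"
  by (metis mult.commute scaleC_of_real scaleC_scaleC)

lemma bounded_linear_scaleC: "bounded_linear (\<lambda>x::'a::complex_normed_vector_c. c *\<^sub>C x)"
  by (rule bounded_linear_intro[where K="cmod c"])
     (auto simp: scaleC_add_right scaleC_scaleR_commute norm_scaleC mult.commute)

lemma bounded_linear_funpow:
  fixes S :: "'a::real_normed_vector \<Rightarrow> 'a"
  assumes "bounded_linear S"
  shows "bounded_linear (S ^^ n)"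
proof (induction n)
  case 0
  show ?case by (simp add: id_def bounded_linear_ident)
next
  case (Suc n)
  then show ?case
    using bounded_linear_compose[OF assms] by (simp add: comp_def)
qed

lemma compact_operator_compose:
  assumes K: "compact_operator K" and B: "bounded_linear B"
  shows "compact_operator (\<lambda>x. B (K x))"
proof -
  let ?C = "closure (K ` ball 0 1)"
  have "compact ?C" and "bounded_linear K"
    using K by (auto simp: compact_operator_def)
  then have "compact (B ` ?C)"
    by (intro compact_continuous_image linear_continuous_on B)
  moreover have "closure ((\<lambda>x. B (K x)) ` ball 0 1) \<subseteq> B ` ?C"
    using closure_subset by (intro closure_minimal compact_imp_closed \<open>compact (B ` ?C)\<close>) fastforce+
  ultimately have "compact (closure ((\<lambda>x. B (K x)) ` ball 0 1))"
    by (metis Int_absorb1 closed_closure compact_Int_closed)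
  then show ?thesis
    using bounded_linear_compose[OF B \<open>bounded_linear K\<close>] by (simp add: compact_operator_def)
qed

lemma compact_operator_norm_limit:
  fixes T :: "'a::real_normed_vector \<Rightarrow> 'b::banach"
  assumes T: "bounded_linear T"
    and approx: "\<And>e. e > 0 \<Longrightarrow>
      \<exists>K. compact_operator K \<and> (\<forall>x. norm (T x - K x) \<le> e * norm x)"
  shows "compact_operator T"
proof -
  let ?S = "closure (T ` ball 0 1)"
  have "compact ?S"
    unfolding compact_eq_totally_bounded
  proof (intro conjI allI impI)
    show "complete ?S" by (simp add: complete_eq_closed)
    fix e :: real assume e: "e > 0"
    obtain K where K: "compact_operator K" and Kx: "\<forall>x. norm (T x - K x) \<le> e/4 * norm x"
      using approx[of "e/4"] e by auto
    have "compact (closure (K ` ball 0 1))" using K by (simp add: compact_operator_def)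
    then obtain F where "finite F" and F: "closure (K ` ball 0 1) \<subseteq> (\<Union>c\<in>F. ball c (e/4))"
      unfolding compact_eq_totally_bounded using e by (meson divide_pos_pos zero_less_numeral)
    have "?S \<subseteq> (\<Union>c\<in>F. ball c e)"
    proof
      fix y assume "y \<in> ?S"
      then obtain x where x: "norm x < 1" and dy: "dist y (T x) < e/4"
        using closure_approachableD[of y "T ` ball 0 1" "e/4"] e by auto
      have "K x \<in> closure (K ` ball 0 1)" using x closure_subset by fastforce
      then obtain c where "c \<in> F" and dc: "dist c (K x) < e/4" using F by auto
      have "dist (T x) (K x) \<le> e/4"
        using Kx[rule_format, of x] x e by (simp add: dist_norm) (smt (verit) mult_left_le)
      then have "dist c y < e"
        using dy dc dist_triangle[of c y "K x"] dist_triangle[of y "K x" "T x"] dist_commute[of y "K x"] e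
        by linarith
      then show "y \<in> (\<Union>c\<in>F. ball c e)" using \<open>c \<in> F\<close> by auto
    qed
    then show "\<exists>F. finite F \<and> ?S \<subseteq> (\<Union>c\<in>F. ball c e)" using \<open>finite F\<close> by blast
  qed
  then show ?thesis using T by (simp add: compact_operator_def)
qed

lemma compact_operator_power_descent:
  fixes S :: "'a::banach \<Rightarrow> 'a"
  assumes S: "bounded_linear S"
    and approx: "\<And>e. e > 0 \<Longrightarrow>
      \<exists>B. bounded_linear B \<and> (\<forall>x. norm (S x - B (S (S x))) \<le> e * norm x)"
    and compact: "compact_operator (S ^^ Suc (Suc n))"
  shows "compact_operator (S ^^ Suc n)"
proof (rule compact_operator_norm_limit)
  show "bounded_linear (S ^^ Suc n)" by (rule bounded_linear_funpow[OF S])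
  fix e :: real assume e: "e > 0"
  define C where "C = onorm (S ^^ n)"
  have C: "norm ((S ^^ n) x) \<le> C * norm x" for x
    unfolding C_def by (rule onorm[OF bounded_linear_funpow[OF S]])
  have "C \<ge> 0" unfolding C_def by (rule onorm_pos_le[OF bounded_linear_funpow[OF S]])
  then obtain B where B: "bounded_linear B"
    and SB: "\<And>x. norm (S x - B (S (S x))) \<le> e / (C + 1) * norm x"
    using approx[of "e / (C + 1)"] e by auto
  have "norm ((S ^^ Suc n) x - B ((S ^^ Suc (Suc n)) x)) \<le> e * norm x" for x
  proof -
    have "norm ((S ^^ Suc n) x - B ((S ^^ Suc (Suc n)) x)) \<le> e / (C + 1) * norm ((S ^^ n) x)"
      using SB[of "(S ^^ n) x"] by simp
    also have "\<dots> \<le> e / (C + 1) * (C * norm x)"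
      using C e \<open>C \<ge> 0\<close> by (intro mult_left_mono) auto
    also have "\<dots> \<le> e * norm x"
      using e \<open>C \<ge> 0\<close> by (simp add: field_simps mult_right_mono)
    finally show ?thesis .
  qed
  then show "\<exists>K. compact_operator K \<and> (\<forall>x. norm ((S ^^ Suc n) x - K x) \<le> e * norm x)"
    using compact_operator_compose[OF compact B] by blast
qed

lemma compact_operator_of_compact_power:
  fixes S :: "'a::banach \<Rightarrow> 'a"
  assumes S: "bounded_linear S"
    and approx: "\<And>e. e > 0 \<Longrightarrow>
      \<exists>B. bounded_linear B \<and> (\<forall>x. norm (S x - B (S (S x))) \<le> e * norm x)"
    and "compact_operator (S ^^ Suc n)"
  shows "compact_operator S"
  using assms(3)
proof (induction n)
  case 0
  then show ?case by simp
next
  case (Suc n)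
  then show ?case using compact_operator_power_descent[OF S approx] by blast
qed

lemma is_resolvent_resolvent:
  assumes "l \<in> resolvent_set D A"
  shows "is_resolvent D A l (resolvent D A l)"
proof -
  obtain R where "is_resolvent D A l R"
    using assms unfolding resolvent_set_def by blast
  then show ?thesis
    unfolding resolvent_def by (rule someI[where P = "is_resolvent D A l"])
qed

lemma is_resolvent_scaleC:
  assumes cl: "closed_operator D A" and R: "is_resolvent D A l R"
  shows "R (c *\<^sub>C y) = c *\<^sub>C R y"
proof -
  from R have "R y \<in> D" and Ry: "l *\<^sub>C R y - A (R y) = y"
    and inv: "\<And>x. x \<in> D \<Longrightarrow> R (l *\<^sub>C x - A x) = x"
    by (auto simp: is_resolvent_def)
  with cl have "c *\<^sub>C R y \<in> D" and "A (c *\<^sub>C R y) = c *\<^sub>C A (R y)"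
    by (auto simp: closed_operator_def)
  then have "l *\<^sub>C (c *\<^sub>C R y) - A (c *\<^sub>C R y) = c *\<^sub>C (l *\<^sub>C R y - A (R y))"
    by (simp add: scaleC_diff_right scaleC_scaleC mult.commute)
  then show ?thesis
    using inv[OF \<open>c *\<^sub>C R y \<in> D\<close>] Ry by simp
qed

lemma resolvent_identity:
  assumes cl: "closed_operator D A"
    and R: "is_resolvent D A l R" and Q: "is_resolvent D A m Q"
  shows "R y = Q y + (m - l) *\<^sub>C R (Q y)"
proof -
  define x where "x = Q y"
  from Q have "x \<in> D" and "m *\<^sub>C x - A x = y" by (auto simp: is_resolvent_def x_def)
  then have "l *\<^sub>C x - A x = y + (l - m) *\<^sub>C x"
    by (auto simp: scaleC_diff_left algebra_simps)
  with R \<open>x \<in> D\<close> have "x = R y + R ((l - m) *\<^sub>C x)"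
    by (metis is_resolvent_def bounded_linear.linear linear_add)
  also have "R ((l - m) *\<^sub>C x) = (l - m) *\<^sub>C R x"
    by (rule is_resolvent_scaleC[OF cl R])
  finally show ?thesis
    unfolding x_def[symmetric] by (simp add: scaleC_diff_left algebra_simps)
qed

lemma bounded_linear_resolvent_shift:
  assumes "bounded_linear R"
  shows "bounded_linear (\<lambda>y::'a::complex_normed_vector_c. a *\<^sub>C (y + c *\<^sub>C R y))"
proof -
  have "bounded_linear (\<lambda>y. y + c *\<^sub>C R y)"
    using bounded_linear_add[OF bounded_linear_ident
        bounded_linear_compose[OF bounded_linear_scaleC assms]] .
  then show ?thesis
    by (rule bounded_linear_compose[OF bounded_linear_scaleC])
qed

lemma compact_resolvent_of_compact_resolvent:
  assumes cl: "closed_operator D A"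
    and \<mu>: "\<mu> \<in> resolvent_set D A" "compact_operator (resolvent D A \<mu>)"
    and l: "l \<in> resolvent_set D A"
  shows "compact_operator (resolvent D A l)"
proof -
  let ?R = "resolvent D A l" and ?S = "resolvent D A \<mu>"
  have R: "is_resolvent D A l ?R" and S: "is_resolvent D A \<mu> ?S"
    using \<mu>(1) l by (simp_all add: is_resolvent_resolvent)
  have "bounded_linear ?R" using R by (simp add: is_resolvent_def)
  then have "compact_operator (\<lambda>x. 1 *\<^sub>C (?S x + (\<mu> - l) *\<^sub>C ?R (?S x)))"
    by (intro compact_operator_compose[OF \<mu>(2)] bounded_linear_resolvent_shift)
  also have "(\<lambda>x. 1 *\<^sub>C (?S x + (\<mu> - l) *\<^sub>C ?R (?S x))) = ?R"
  proof
    fix x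
    show "1 *\<^sub>C (?S x + (\<mu> - l) *\<^sub>C ?R (?S x)) = ?R x"
      using resolvent_identity[OF cl R S, of x] by (simp only: scaleC_one)
  qed
  finally show ?thesis .
qed

lemma norm_resolvent_comp_diff:
  assumes cl: "closed_operator D A"
    and S: "is_resolvent D A \<mu> S" and R: "is_resolvent D A (complex_of_real t) R"
    and bound: "\<And>y. t * norm (R y) \<le> M * norm y" and "M \<ge> 0" "t > 0"
  shows "t * norm (S x - complex_of_real t *\<^sub>C R (S x)) \<le> M * (1 + cmod \<mu> * onorm S) * norm x"
proof -
  have "R x = S x + (\<mu> - complex_of_real t) *\<^sub>C R (S x)"
    by (rule resolvent_identity[OF cl R S])
  then have "S x - complex_of_real t *\<^sub>C R (S x) = R x - \<mu> *\<^sub>C R (S x)"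
    by (simp add: scaleC_diff_left algebra_simps)
  then have triangle: "norm (S x - complex_of_real t *\<^sub>C R (S x)) \<le> norm (R x) + cmod \<mu> * norm (R (S x))"
    by (metis norm_scaleC norm_triangle_ineq4)
  have "t * norm (S x - complex_of_real t *\<^sub>C R (S x)) \<le> t * norm (R x) + cmod \<mu> * (t * norm (R (S x)))"
    using mult_left_mono[OF triangle, of t] \<open>t > 0\<close> by (simp add: algebra_simps)
  also have "\<dots> \<le> M * norm x + cmod \<mu> * (M * norm (S x))"
    using bound by (intro add_mono mult_left_mono) auto
  also have "\<dots> \<le> M * norm x + cmod \<mu> * (M * (onorm S * norm x))"
    using onorm[of S x] S \<open>M \<ge> 0\<close> by (intro add_mono mult_left_mono) (auto simp: is_resolvent_def)
  finally show ?thesis by (simp add: algebra_simps)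
qed

lemma resolvent_approx_by_square:
  assumes cl: "closed_operator D A" and S: "is_resolvent D A \<mu> S"
    and growth: "\<exists>t0 M. \<forall>t::real. t \<ge> t0 \<longrightarrow>
           complex_of_real t \<in> resolvent_set D A \<and>
           onorm (\<lambda>x. complex_of_real t *\<^sub>C resolvent D A (complex_of_real t) x) \<le> M"
    and "e > 0"
  shows "\<exists>B. bounded_linear B \<and> (\<forall>x. norm (S x - B (S (S x))) \<le> e * norm x)"
proof -
  obtain t0 M where tM: "\<And>t::real. t \<ge> t0 \<Longrightarrow>
           complex_of_real t \<in> resolvent_set D A \<and>
           onorm (\<lambda>x. complex_of_real t *\<^sub>C resolvent D A (complex_of_real t) x) \<le> M"
    using growth by blast
  define C where "C = M * (1 + cmod \<mu> * onorm S)"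
  define t where "t = max (max t0 1) (C / e)"
  let ?R = "resolvent D A (complex_of_real t)"
  have "t \<ge> 1" and "t \<ge> t0" and "t \<ge> C / e"
    by (simp_all add: t_def)
  then have "t > 0" and "t * e \<ge> C"
    using \<open>e > 0\<close> by (auto simp: pos_divide_le_eq)
  from tM[OF \<open>t \<ge> t0\<close>] have R: "is_resolvent D A (complex_of_real t) ?R"
    and onorm_tR: "onorm (\<lambda>y. complex_of_real t *\<^sub>C ?R y) \<le> M"
    by (auto intro: is_resolvent_resolvent)
  have bl_tR: "bounded_linear (\<lambda>y. complex_of_real t *\<^sub>C ?R y)"
    using R bounded_linear_compose[OF bounded_linear_scaleC] by (auto simp: is_resolvent_def)
  have "M \<ge> 0" using onorm_pos_le[OF bl_tR] onorm_tR by linarith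
  have bound: "t * norm (?R y) \<le> M * norm y" for y
    using onorm[OF bl_tR, of y] mult_right_mono[OF onorm_tR norm_ge_zero[of y]] \<open>t > 0\<close>
    by (simp add: norm_scaleC)
  define B where "B = (\<lambda>z. complex_of_real t *\<^sub>C (z + (\<mu> - complex_of_real t) *\<^sub>C ?R z))"
  have "bounded_linear B"
    unfolding B_def using R by (intro bounded_linear_resolvent_shift) (simp add: is_resolvent_def)
  moreover have "norm (S x - B (S (S x))) \<le> e * norm x" for x
  proof -
    have "B (S (S x)) = complex_of_real t *\<^sub>C ?R (S x)"
      unfolding B_def by (metis resolvent_identity[OF cl R S])
    then have "t * norm (S x - B (S (S x))) \<le> C * norm x"
      unfolding C_def using norm_resolvent_comp_diff[OF cl S R bound \<open>M \<ge> 0\<close> \<open>t > 0\<close>] by simp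
    also have "\<dots> \<le> t * (e * norm x)"
      using \<open>t * e \<ge> C\<close> by (simp add: mult_right_mono flip: mult.assoc)
    finally show ?thesis using \<open>t > 0\<close> by simp
  qed
  ultimately show ?thesis by blast
qed

theorem proposition3p2:
  fixes D :: "'a::complex_banach set" and A :: "'a \<Rightarrow> 'a"
  assumes "closed_operator D A"
    and "\<exists>t0 M. \<forall>t::real. t \<ge> t0 \<longrightarrow>
           complex_of_real t \<in> resolvent_set D A \<and>
           onorm (\<lambda>x. complex_of_real t *\<^sub>C resolvent D A (complex_of_real t) x) \<le> M"
    and "\<mu>0 \<in> resolvent_set D A" and "(k::nat) \<ge> 1"
    and "compact_operator (resolvent D A \<mu>0 ^^ k)"
  shows "\<forall>l\<in>resolvent_set D A. compact_operator (resolvent D A l)"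
proof
  fix l assume l: "l \<in> resolvent_set D A"
  let ?S = "resolvent D A \<mu>0"
  have S: "is_resolvent D A \<mu>0 ?S"
    using assms(3) by (rule is_resolvent_resolvent)
  obtain n where "k = Suc n" using assms(4) by (cases k) auto
  then have "compact_operator ?S"
    using assms(5) S resolvent_approx_by_square[OF assms(1) S assms(2)]
    by (intro compact_operator_of_compact_power[of ?S n]) (auto simp: is_resolvent_def)
  then show "compact_operator (resolvent D A l)"
    using compact_resolvent_of_compact_resolvent[OF assms(1) assms(3) _ l] by blast
qed

end
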